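(* Let $I\subset\mathbb R$ be a bounded closed non-degenerate interval, $r_0>1$, and $f,f_n\in L^{r_0}(I)$ ($n\in\mathbb N$) with $f_n\to f$ in $L^{r_0}(I)$. Then $\tau_r^{f_n}\to\tau_r^f$ locally uniformly in $r\in]1,r_0]$, i.e. uniformly on $[s,r_0]$ for every $1<s<r_0$.
   Context: For $g\in L^r(I)$ with $r>1$, $\tau_r^g$ denotes the unique real number minimizing $t\mapsto\|g-t\|_{L^r(I)}$. *)

theory Defs
  imports "HOL-Analysis.Analysis"
begin

text \<open>The interval I = {a..b}; functions are real-valued on the reals, only their
  values on I matter. L^r(I) membership: Lebesgue measurable on I and |g|^r integrable on I.\<close>

definition in_Lr :: "real \<Rightarrow> real \<Rightarrow> real \<Rightarrow> (real \<Rightarrow> real) \<Rightarrow> bool" where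
  "in_Lr a b r g \<longleftrightarrow> set_borel_measurable lebesgue {a..b} g
      \<and> set_integrable lebesgue {a..b} (\<lambda>x. \<bar>g x\<bar> powr r)"

definition Lr_norm :: "real \<Rightarrow> real \<Rightarrow> real \<Rightarrow> (real \<Rightarrow> real) \<Rightarrow> real" where
  "Lr_norm a b r g = (\<integral>x\<in>{a..b}. \<bar>g x\<bar> powr r \<partial>lebesgue) powr (1 / r)"

definition tau :: "real \<Rightarrow> real \<Rightarrow> real \<Rightarrow> (real \<Rightarrow> real) \<Rightarrow> real" where
  "tau a b r g = (THE t. \<forall>u. Lr_norm a b r (\<lambda>x. g x - t) \<le> Lr_norm a b r (\<lambda>x. g x - u))"

end

theory Submission
  imports Defs
begin

text \<open>Let \<open>abs_moment a b r g t\<close> be the integral of \<open>\<bar>g - t\<bar> powr r\<close> over \<open>I\<close>; \<open>tau a b r g\<close> is its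
  minimiser in \<open>t\<close>, which exists by coercivity and is unique by strict convexity of \<open>\<bar>x\<bar> powr r\<close>.
  All minimisers for \<open>r \<in> {s..r0}\<close> lie in a common interval \<open>[-T, T]\<close>, and on \<open>{s..r0} \<times> [-T, T]\<close> the
  moments of \<open>F n\<close> converge uniformly to those of \<open>f\<close>: pointwise
  \<open>\<bar>y - t\<bar> powr r \<le> (1 + d) powr r * \<bar>x - t\<bar> powr r + (1 + 1 / d) powr r * \<bar>y - x\<bar> powr r\<close>,
  and \<open>\<bar>y - x\<bar> powr r\<close> is controlled by \<open>\<bar>y - x\<bar> powr r0\<close> uniformly in \<open>r \<ge> s\<close>.
  Since the limiting moment is jointly continuous in \<open>(r, t)\<close>, a compactness argument shows that
  minimisers of uniformly convergent functions with unique limiting minimisers converge uniformly.\<close>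

subsection \<open>Minimisers of uniformly convergent functions\<close>

lemma uniform_limit_tendsto_along:
  fixes G :: "nat \<Rightarrow> 'a::topological_space \<Rightarrow> 'b::metric_space"
  assumes lim: "uniform_limit S G H sequentially" and cont: "continuous_on S H"
    and nk: "filterlim nk sequentially sequentially"
    and xk: "\<And>k. xk k \<in> S" "xk \<longlonglongrightarrow> x" and x: "x \<in> S"
  shows "(\<lambda>k. G (nk k) (xk k)) \<longlonglongrightarrow> H x"
proof (rule tendstoI)
  fix e :: real assume "0 < e"
  have "(\<lambda>k. H (xk k)) \<longlonglongrightarrow> H x"
    using continuous_on_tendsto_compose[OF cont xk(2) x] xk(1) by (simp add: o_def)
  then have "\<forall>\<^sub>F k in sequentially. dist (H (xk k)) (H x) < e / 2"
    using \<open>0 < e\<close> by (intro tendstoD) auto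
  moreover have "\<forall>\<^sub>F k in sequentially. \<forall>y\<in>S. dist (G (nk k) y) (H y) < e / 2"
    using eventually_compose_filterlim[OF uniform_limitD[OF lim] nk] \<open>0 < e\<close> half_gt_zero
    by blast
  ultimately show "\<forall>\<^sub>F k in sequentially. dist (G (nk k) (xk k)) (H x) < e"
  proof eventually_elim
    case (elim k)
    then show ?case using dist_triangle[of "G (nk k) (xk k)" "H x" "H (xk k)"] xk(1)[of k] by fastforce
  qed
qed

lemma uniform_limit_argmin:
  fixes \<Phi> :: "nat \<Rightarrow> 'a::metric_space \<Rightarrow> 'b::metric_space \<Rightarrow> real" and \<phi> :: "'a \<Rightarrow> 'b \<Rightarrow> real"
  assumes K: "compact K" and C: "compact C"
    and lim: "uniform_limit (K \<times> C) (\<lambda>n (r, t). \<Phi> n r t) (\<lambda>(r, t). \<phi> r t) sequentially"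
    and cont: "continuous_on (K \<times> C) (\<lambda>(r, t). \<phi> r t)"
    and M_in: "\<And>n r. r \<in> K \<Longrightarrow> M n r \<in> C" and m_in: "\<And>r. r \<in> K \<Longrightarrow> m r \<in> C"
    and M_min: "\<And>n r u. r \<in> K \<Longrightarrow> \<Phi> n r (M n r) \<le> \<Phi> n r u"
    and m_min: "\<And>r u. r \<in> K \<Longrightarrow> \<phi> r (m r) \<le> \<phi> r u"
    and m_unique: "\<And>r t. r \<in> K \<Longrightarrow> (\<And>u. \<phi> r t \<le> \<phi> r u) \<Longrightarrow> t = m r"
  shows "uniform_limit K M m sequentially"
proof (rule ccontr)
  assume "\<not> uniform_limit K M m sequentially"
  then obtain \<epsilon> where "\<epsilon> > 0" and "\<forall>N. \<exists>n\<ge>N. \<exists>r\<in>K. \<epsilon> \<le> dist (M n r) (m r)"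
    by (auto simp: uniform_limit_sequentially_iff not_less)
  then obtain nk rk where nk: "\<And>k. k \<le> nk k" and rk: "\<And>k. rk k \<in> K"
    and far: "\<And>k. \<epsilon> \<le> dist (M (nk k) (rk k)) (m (rk k))"
    by metis
  define q where "q k = (rk k, M (nk k) (rk k), m (rk k))" for k
  have "seq_compact (K \<times> C \<times> C)"
    by (intro compact_imp_seq_compact compact_Times K C)
  moreover have "\<forall>k. q k \<in> K \<times> C \<times> C" using rk M_in m_in by (simp add: q_def)
  ultimately obtain l h where l: "l \<in> K \<times> C \<times> C" and h: "strict_mono h" and lim_q: "(q \<circ> h) \<longlonglongrightarrow> l"
    by (rule seq_compactE)
  obtain r \<alpha> \<beta> where l_eq: "l = (r, \<alpha>, \<beta>)" by (rule prod_cases3)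
  have r: "r \<in> K" and \<alpha>: "\<alpha> \<in> C" and \<beta>: "\<beta> \<in> C" using l by (simp_all add: l_eq)
  have lim_rk: "(\<lambda>k. rk (h k)) \<longlonglongrightarrow> r"
    using tendsto_fst[OF lim_q] by (simp add: l_eq q_def o_def)
  have lim_\<alpha>: "(\<lambda>k. M (nk (h k)) (rk (h k))) \<longlonglongrightarrow> \<alpha>"
    using tendsto_fst[OF tendsto_snd[OF lim_q]] by (simp add: l_eq q_def o_def)
  have lim_\<beta>: "(\<lambda>k. m (rk (h k))) \<longlonglongrightarrow> \<beta>"
    using tendsto_snd[OF tendsto_snd[OF lim_q]] by (simp add: l_eq q_def o_def)
  have "k \<le> nk (h k)" for k using seq_suble[OF h, of k] nk[of "h k"] by linarith
  then have nk_h: "filterlim (\<lambda>k. nk (h k)) sequentially sequentially"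
    by (intro filterlim_at_top_mono[OF filterlim_ident] always_eventually) blast
  have lim_\<Phi>: "(\<lambda>k. \<Phi> (nk (h k)) (rk (h k)) (tk k)) \<longlonglongrightarrow> \<phi> r t"
    if "tk \<longlonglongrightarrow> t" "\<And>k. tk k \<in> C" "t \<in> C" for tk t
    using uniform_limit_tendsto_along[OF lim cont nk_h, of "\<lambda>k. (rk (h k), tk k)" "(r, t)"]
      that rk r by (simp add: tendsto_Pair lim_rk)
  have lim_\<phi>: "(\<lambda>k. \<phi> (rk (h k)) (tk k)) \<longlonglongrightarrow> \<phi> r t"
    if "tk \<longlonglongrightarrow> t" "\<And>k. tk k \<in> C" "t \<in> C" for tk t
    using continuous_on_tendsto_compose[OF cont tendsto_Pair[OF lim_rk that(1)]] that rk r
    by (simp add: o_def)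
  have \<beta>_min: "\<phi> r \<beta> \<le> \<phi> r u" if "u \<in> C" for u
    by (rule LIMSEQ_le[OF lim_\<phi>[OF lim_\<beta>] lim_\<phi>[OF tendsto_const]])
      (use m_in m_min rk \<beta> that in auto)
  have "\<phi> r \<alpha> \<le> \<phi> r \<beta>"
    by (rule LIMSEQ_le[OF lim_\<Phi>[OF lim_\<alpha>] lim_\<Phi>[OF lim_\<beta>]])
      (use M_in m_in M_min rk \<alpha> \<beta> in auto)
  moreover have "\<phi> r \<beta> \<le> \<phi> r (m r)" using \<beta>_min m_in r by blast
  ultimately have "\<alpha> = m r" "\<beta> = m r"
    using m_min[OF r] by (metis order.trans m_unique[OF r])+
  moreover have "\<epsilon> \<le> dist \<alpha> \<beta>"
    by (rule LIMSEQ_le_const[OF tendsto_dist[OF lim_\<alpha> lim_\<beta>]]) (use far in auto)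
  ultimately show False using \<open>\<epsilon> > 0\<close> by simp
qed

subsection \<open>Inequalities for \<open>powr\<close>\<close>

lemma powr_midpoint_less:
  fixes u v r :: real
  assumes "0 \<le> u" "u < v" "1 < r"
  shows "((u + v) / 2) powr r < (u powr r + v powr r) / 2"
proof (cases "u = 0")
  case True
  have "(v / 2) powr r = v powr r / 2 powr r" using assms by (simp add: powr_divide)
  moreover have "2 powr 1 < 2 powr r" using assms by (intro powr_less_mono) auto
  then have "v powr r / 2 powr r < v powr r / 2"
    using assms by (intro divide_strict_left_mono) auto
  ultimately show ?thesis using True by simp
next
  case False
  define m where "m = (u + v) / 2"
  have um: "0 < u" "u < m" "m < v" "m - u = v - m" using assms False by (auto simp: m_def field_simps)
  have deriv: "DERIV (\<lambda>z. z powr r) x :> r * x powr (r - 1)" if "0 < x" for x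
    using that by (intro has_real_derivative_powr) auto
  obtain z1 where z1: "u < z1" "z1 < m" "m powr r - u powr r = (m - u) * (r * z1 powr (r - 1))"
    using MVT2[OF um(2) deriv] um by auto
  obtain z2 where z2: "m < z2" "z2 < v" "v powr r - m powr r = (v - m) * (r * z2 powr (r - 1))"
    using MVT2[OF um(3) deriv] um by auto
  have "z1 powr (r - 1) < z2 powr (r - 1)"
    using z1 z2 um assms by (intro powr_less_mono2) auto
  then have "(m - u) * (r * z1 powr (r - 1)) < (v - m) * (r * z2 powr (r - 1))"
    using um assms by (metis mult_less_cancel_left_pos zero_less_one less_trans diff_gt_0_iff_gt)
  then have "m powr r - u powr r < v powr r - m powr r" using z1 z2 by simp
  then show ?thesis by (simp add: m_def field_simps)
qed

lemma abs_powr_midpoint_less: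
  fixes x y r :: real
  assumes "x \<noteq> y" "1 < r"
  shows "\<bar>(x + y) / 2\<bar> powr r < (\<bar>x\<bar> powr r + \<bar>y\<bar> powr r) / 2"
proof (cases "\<bar>x\<bar> = \<bar>y\<bar>")
  case True
  then have "y = - x" "x \<noteq> 0" using assms by (auto simp: abs_eq_iff)
  then show ?thesis using assms by simp
next
  case False
  have "\<bar>(x + y) / 2\<bar> powr r \<le> ((\<bar>x\<bar> + \<bar>y\<bar>) / 2) powr r"
    using assms by (intro powr_mono2) auto
  moreover have "((\<bar>x\<bar> + \<bar>y\<bar>) / 2) powr r < (\<bar>x\<bar> powr r + \<bar>y\<bar> powr r) / 2"
    using False powr_midpoint_less[of "\<bar>x\<bar>" "\<bar>y\<bar>" r] powr_midpoint_less[of "\<bar>y\<bar>" "\<bar>x\<bar>" r] assms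
    by (cases "\<bar>x\<bar> < \<bar>y\<bar>") (simp_all add: add.commute)
  ultimately show ?thesis by linarith
qed

lemma powr_add_le_weighted:
  fixes p q d r :: real
  assumes "0 \<le> p" "0 \<le> q" "0 < d" "0 \<le> r"
  shows "(p + q) powr r \<le> (1 + d) powr r * p powr r + (1 + 1 / d) powr r * q powr r"
proof (cases "q \<le> d * p")
  case True
  then have "(p + q) powr r \<le> ((1 + d) * p) powr r"
    using assms by (intro powr_mono2) (auto simp: algebra_simps)
  then show ?thesis using assms by (simp add: powr_mult add_increasing2)
next
  case False
  then have "p + q \<le> (1 + 1 / d) * q" using assms by (simp add: field_simps)
  then have "(p + q) powr r \<le> ((1 + 1 / d) * q) powr r"
    using assms by (intro powr_mono2) auto
  then show ?thesis using assms by (simp add: powr_mult add_increasing)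
qed

lemma abs_diff_powr_le:
  fixes x y r :: real
  assumes "0 \<le> r"
  shows "\<bar>x - y\<bar> powr r \<le> 2 powr r * (\<bar>x\<bar> powr r + \<bar>y\<bar> powr r)"
proof -
  have "\<bar>x - y\<bar> powr r \<le> (\<bar>x\<bar> + \<bar>y\<bar>) powr r" using assms by (intro powr_mono2) auto
  also have "\<dots> \<le> (1 + 1) powr r * \<bar>x\<bar> powr r + (1 + 1 / 1) powr r * \<bar>y\<bar> powr r"
    using assms by (intro powr_add_le_weighted) auto
  finally show ?thesis by (simp add: algebra_simps)
qed

lemma powr_le_one_plus_powr:
  fixes z r r0 :: real
  assumes "0 \<le> z" "0 \<le> r" "r \<le> r0"
  shows "z powr r \<le> 1 + z powr r0"
proof (cases "z \<le> 1")
  case True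
  then show ?thesis using assms powr_le1[of r z] by (simp add: add_increasing2)
next
  case False
  then have "z powr r \<le> z powr r0" using assms by (intro powr_mono) auto
  then show ?thesis by simp
qed

lemma powr_le_split:
  fixes z r r0 s e :: real
  assumes "0 \<le> z" "0 \<le> s" "s \<le> r" "r \<le> r0" "0 < e" "e \<le> 1"
  shows "z powr r \<le> e powr s + e powr (s - r0) * z powr r0"
proof (cases "z \<le> e")
  case True
  have "z powr r \<le> e powr r" using assms True by (intro powr_mono2) auto
  also have "\<dots> \<le> e powr s" using assms by (intro powr_mono') auto
  finally show ?thesis by (simp add: add_increasing2)
next
  case False
  then have "z powr r = z powr (r - r0) * z powr r0" by (simp add: powr_add[symmetric])
  also have "\<dots> \<le> e powr (r - r0) * z powr r0"
    using assms False by (intro mult_right_mono powr_mono2') auto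
  also have "\<dots> \<le> e powr (s - r0) * z powr r0"
    using assms by (intro mult_right_mono powr_mono') auto
  finally show ?thesis by (simp add: add_increasing)
qed

lemma abs_diff_powr_le_bound:
  fixes y t T r r0 :: real
  assumes "\<bar>t\<bar> \<le> T" "0 \<le> r" "r \<le> r0"
  shows "\<bar>y - t\<bar> powr r \<le> 1 + 2 powr r0 * (\<bar>y\<bar> powr r0 + T powr r0)"
proof -
  have "\<bar>y - t\<bar> powr r \<le> 1 + \<bar>y - t\<bar> powr r0"
    using assms by (intro powr_le_one_plus_powr) auto
  moreover have "\<bar>y - t\<bar> powr r0 \<le> 2 powr r0 * (\<bar>y\<bar> powr r0 + \<bar>t\<bar> powr r0)"
    using assms by (intro abs_diff_powr_le) auto
  moreover have "\<bar>t\<bar> powr r0 \<le> T powr r0" using assms by (intro powr_mono2) auto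
  ultimately show ?thesis by (smt (verit) mult_left_mono powr_ge_zero)
qed

lemma abs_diff_powr_le_perturb:
  fixes x y t d e s r r0 :: real
  assumes "0 < d" "0 < e" "e \<le> 1" "0 \<le> s" "s \<le> r" "r \<le> r0"
  shows "\<bar>y - t\<bar> powr r
           \<le> (1 + d) powr r0 * \<bar>x - t\<bar> powr r + (1 + 1 / d) powr r0 * (e powr s + e powr (s - r0) * \<bar>y - x\<bar> powr r0)"
proof -
  have "\<bar>y - t\<bar> powr r \<le> (\<bar>x - t\<bar> + \<bar>y - x\<bar>) powr r" using assms by (intro powr_mono2) auto
  also have "\<dots> \<le> (1 + d) powr r * \<bar>x - t\<bar> powr r + (1 + 1 / d) powr r * \<bar>y - x\<bar> powr r"
    using assms by (intro powr_add_le_weighted) auto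
  also have "\<dots> \<le> (1 + d) powr r0 * \<bar>x - t\<bar> powr r + (1 + 1 / d) powr r0 * (e powr s + e powr (s - r0) * \<bar>y - x\<bar> powr r0)"
  proof (rule add_mono[OF mult_right_mono mult_mono])
    show "(1 + d) powr r \<le> (1 + d) powr r0" "(1 + 1 / d) powr r \<le> (1 + 1 / d) powr r0"
      using assms by (auto intro: powr_mono)
    show "\<bar>y - x\<bar> powr r \<le> e powr s + e powr (s - r0) * \<bar>y - x\<bar> powr r0"
      using assms by (intro powr_le_split) auto
  qed auto
  finally show ?thesis .
qed

subsection \<open>The spaces \<open>L\<^sup>r(I)\<close>\<close>

lemma in_Lr_iff:
  "in_Lr a b r g \<longleftrightarrow> g \<in> borel_measurable (lebesgue_on {a..b})
     \<and> integrable (lebesgue_on {a..b}) (\<lambda>x. \<bar>g x\<bar> powr r)"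
  unfolding in_Lr_def set_borel_measurable_def set_integrable_def
  by (simp add: borel_measurable_restrict_space_iff integrable_restrict_space)

lemma in_Lr_const: "in_Lr a b r (\<lambda>_. c)"
  by (simp add: in_Lr_iff)

lemma in_Lr_diff:
  assumes "0 \<le> r" and g: "in_Lr a b r g" and h: "in_Lr a b r h"
  shows "in_Lr a b r (\<lambda>x. g x - h x)"
  unfolding in_Lr_iff
proof
  show meas: "(\<lambda>x. g x - h x) \<in> borel_measurable (lebesgue_on {a..b})"
    using g h by (simp add: in_Lr_iff borel_measurable_diff)
  show "integrable (lebesgue_on {a..b}) (\<lambda>x. \<bar>g x - h x\<bar> powr r)"
  proof (rule Bochner_Integration.integrable_bound)
    show "integrable (lebesgue_on {a..b}) (\<lambda>x. 2 powr r * (\<bar>g x\<bar> powr r + \<bar>h x\<bar> powr r))"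
      using g h by (simp add: in_Lr_iff)
    show "AE x in lebesgue_on {a..b}. norm (\<bar>g x - h x\<bar> powr r)
            \<le> norm (2 powr r * (\<bar>g x\<bar> powr r + \<bar>h x\<bar> powr r))"
      using abs_diff_powr_le[OF \<open>0 \<le> r\<close>] by simp
  qed (use meas in measurable)
qed

lemma in_Lr_mono:
  assumes "0 \<le> r" "r \<le> r0" and g: "in_Lr a b r0 g"
  shows "in_Lr a b r g"
  unfolding in_Lr_iff
proof
  show meas: "g \<in> borel_measurable (lebesgue_on {a..b})" using g by (simp add: in_Lr_iff)
  show "integrable (lebesgue_on {a..b}) (\<lambda>x. \<bar>g x\<bar> powr r)"
  proof (rule Bochner_Integration.integrable_bound)
    show "integrable (lebesgue_on {a..b}) (\<lambda>x. 1 + \<bar>g x\<bar> powr r0)"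
      using g by (simp add: in_Lr_iff)
    show "AE x in lebesgue_on {a..b}. norm (\<bar>g x\<bar> powr r) \<le> norm (1 + \<bar>g x\<bar> powr r0)"
      using powr_le_one_plus_powr assms by simp
  qed (use meas in measurable)
qed

lemma integrable_abs_diff_powr:
  assumes "in_Lr a b r0 g" "0 \<le> r" "r \<le> r0"
  shows "integrable (lebesgue_on {a..b}) (\<lambda>x. \<bar>g x - t\<bar> powr r)"
  using in_Lr_diff[OF _ in_Lr_mono[OF _ _ assms(1)] in_Lr_const] assms by (simp add: in_Lr_iff)

lemma Lr_norm_lebesgue_on:
  "Lr_norm a b r g = (\<integral>x. \<bar>g x\<bar> powr r \<partial>lebesgue_on {a..b}) powr (1 / r)"
  unfolding Lr_norm_def set_lebesgue_integral_def by (simp add: integral_restrict_space)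

lemma integral_abs_powr_tendsto_zero:
  assumes lim: "(\<lambda>n. Lr_norm a b r (G n)) \<longlonglongrightarrow> 0" and "0 < r"
  shows "(\<lambda>n. \<integral>x. \<bar>G n x\<bar> powr r \<partial>lebesgue_on {a..b}) \<longlonglongrightarrow> 0"
proof -
  have "(\<lambda>n. Lr_norm a b r (G n) powr r) \<longlonglongrightarrow> 0 powr r"
    using \<open>0 < r\<close> by (intro tendsto_powr'[OF lim tendsto_const]) (auto simp: Lr_norm_def)
  moreover have "Lr_norm a b r (G n) powr r = (\<integral>x. \<bar>G n x\<bar> powr r \<partial>lebesgue_on {a..b})" for n
    unfolding Lr_norm_lebesgue_on using \<open>0 < r\<close> by (simp add: powr_powr integral_nonneg_AE)
  ultimately show ?thesis by simp
qed

lemma integral_abs_powr_bounded: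
  assumes "0 \<le> r" and g: "in_Lr a b r g" and G: "\<And>n. in_Lr a b r (G n)"
    and lim: "(\<lambda>n. \<integral>x. \<bar>G n x - g x\<bar> powr r \<partial>lebesgue_on {a..b}) \<longlonglongrightarrow> 0"
  obtains I where "(\<integral>x. \<bar>g x\<bar> powr r \<partial>lebesgue_on {a..b}) \<le> I"
    and "\<And>n. (\<integral>x. \<bar>G n x\<bar> powr r \<partial>lebesgue_on {a..b}) \<le> I"
proof -
  let ?Ig = "\<integral>x. \<bar>g x\<bar> powr r \<partial>lebesgue_on {a..b}"
  obtain K where K: "\<And>n. (\<integral>x. \<bar>G n x - g x\<bar> powr r \<partial>lebesgue_on {a..b}) \<le> K"
    using BseqE[OF convergent_imp_Bseq[OF convergentI[OF lim]]] by (metis abs_le_D1 real_norm_def)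
  have bound: "(\<integral>x. \<bar>G n x\<bar> powr r \<partial>lebesgue_on {a..b}) \<le> 2 powr r * (K + ?Ig)" for n
  proof -
    have Gg: "in_Lr a b r (\<lambda>x. G n x - g x)" by (rule in_Lr_diff[OF \<open>0 \<le> r\<close> G g])
    have "(\<integral>x. \<bar>G n x\<bar> powr r \<partial>lebesgue_on {a..b})
            \<le> (\<integral>x. 2 powr r * (\<bar>G n x - g x\<bar> powr r + \<bar>- g x\<bar> powr r) \<partial>lebesgue_on {a..b})"
      using abs_diff_powr_le[OF \<open>0 \<le> r\<close>, of "G n x - g x" "- g x" for x] G g Gg
      by (intro integral_mono) (auto simp: in_Lr_iff)
    also have "\<dots> = 2 powr r * ((\<integral>x. \<bar>G n x - g x\<bar> powr r \<partial>lebesgue_on {a..b}) + ?Ig)"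
      using g Gg by (simp add: in_Lr_iff)
    also have "\<dots> \<le> 2 powr r * (K + ?Ig)" using K by (intro mult_left_mono) auto
    finally show ?thesis .
  qed
  show thesis by (rule that[of "max ?Ig (2 powr r * (K + ?Ig))"]) (simp_all add: bound le_max_iff_disj)
qed

subsection \<open>Absolute moments and their minimisers\<close>

definition abs_moment :: "real \<Rightarrow> real \<Rightarrow> real \<Rightarrow> (real \<Rightarrow> real) \<Rightarrow> real \<Rightarrow> real" where
  "abs_moment a b r g t = (\<integral>x. \<bar>g x - t\<bar> powr r \<partial>lebesgue_on {a..b})"

lemma abs_moment_nonneg: "0 \<le> abs_moment a b r g t"
  unfolding abs_moment_def by (intro integral_nonneg_AE) auto

lemma abs_moment_tendsto:
  assumes g: "in_Lr a b r0 g"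
    and r: "rk \<longlonglongrightarrow> r" "0 < r" "\<And>k. 0 \<le> rk k \<and> rk k \<le> r0" and t: "tk \<longlonglongrightarrow> t"
  shows "(\<lambda>k. abs_moment a b (rk k) g (tk k)) \<longlonglongrightarrow> abs_moment a b r g t"
proof -
  obtain T where T: "\<And>k. \<bar>tk k\<bar> \<le> T"
    using BseqE[OF convergent_imp_Bseq[OF convergentI[OF t]]] by (metis real_norm_def)
  have meas: "g \<in> borel_measurable (lebesgue_on {a..b})" using g by (simp add: in_Lr_iff)
  show ?thesis unfolding abs_moment_def
  proof (rule integral_dominated_convergence
      [where w = "\<lambda>x. 1 + 2 powr r0 * (\<bar>g x\<bar> powr r0 + T powr r0)"])
    show "integrable (lebesgue_on {a..b}) (\<lambda>x. 1 + 2 powr r0 * (\<bar>g x\<bar> powr r0 + T powr r0))"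
      using g by (simp add: in_Lr_iff)
    show "AE x in lebesgue_on {a..b}. (\<lambda>k. \<bar>g x - tk k\<bar> powr rk k) \<longlonglongrightarrow> \<bar>g x - t\<bar> powr r"
    proof (intro AE_I2 tendsto_powr')
      show "(\<lambda>k. \<bar>g x - tk k\<bar>) \<longlonglongrightarrow> \<bar>g x - t\<bar>" for x using t by (intro tendsto_intros)
    qed (use r in auto)
    show "AE x in lebesgue_on {a..b}. norm (\<bar>g x - tk k\<bar> powr rk k)
            \<le> 1 + 2 powr r0 * (\<bar>g x\<bar> powr r0 + T powr r0)" for k
      using abs_diff_powr_le_bound T r(3) by (intro AE_I2) auto
  qed (use meas in measurable)
qed

lemma abs_moment_continuous_on:
  assumes g: "in_Lr a b r0 g" and "0 < s"
  shows "continuous_on ({s..r0} \<times> UNIV) (\<lambda>(r, t). abs_moment a b r g t)"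
proof (rule continuous_on_sequentiallyI)
  fix u :: "nat \<Rightarrow> real \<times> real" and x
  assume u: "\<forall>n. u n \<in> {s..r0} \<times> UNIV" and x: "x \<in> {s..r0} \<times> UNIV" and "u \<longlonglongrightarrow> x"
  have "0 \<le> fst (u n) \<and> fst (u n) \<le> r0" for n
    using u[rule_format, of n] \<open>0 < s\<close> by (auto simp: mem_Times_iff)
  then have "(\<lambda>n. abs_moment a b (fst (u n)) g (snd (u n))) \<longlonglongrightarrow> abs_moment a b (fst x) g (snd x)"
    using \<open>0 < s\<close> x \<open>u \<longlonglongrightarrow> x\<close>
    by (intro abs_moment_tendsto[OF g] tendsto_fst tendsto_snd) (auto simp: mem_Times_iff)
  then show "(\<lambda>n. case u n of (r, t) \<Rightarrow> abs_moment a b r g t) \<longlonglongrightarrow> (case x of (r, t) \<Rightarrow> abs_moment a b r g t)"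
    by (simp add: case_prod_beta)
qed

lemma abs_moment_le:
  assumes g: "in_Lr a b r0 g" and r: "0 \<le> r" "r \<le> r0" and "a \<le> b" "\<bar>t\<bar> \<le> T"
  shows "abs_moment a b r g t
           \<le> (b - a) * (1 + 2 powr r0 * T powr r0) + 2 powr r0 * (\<integral>x. \<bar>g x\<bar> powr r0 \<partial>lebesgue_on {a..b})"
proof -
  have "abs_moment a b r g t \<le> (\<integral>x. 1 + 2 powr r0 * (\<bar>g x\<bar> powr r0 + T powr r0) \<partial>lebesgue_on {a..b})"
    unfolding abs_moment_def using assms
    by (intro integral_mono integrable_abs_diff_powr[OF g] abs_diff_powr_le_bound)
      (auto simp: in_Lr_iff)
  also have "\<dots> = (b - a) * (1 + 2 powr r0 * T powr r0) + 2 powr r0 * (\<integral>x. \<bar>g x\<bar> powr r0 \<partial>lebesgue_on {a..b})"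
    using assms by (simp add: in_Lr_iff measure_restrict_space algebra_simps)
  finally show ?thesis .
qed

lemma abs_le_if_abs_moment_le_zero:
  assumes g: "in_Lr a b r g" and "1 \<le> r" "a < b"
    and le: "abs_moment a b r g t \<le> abs_moment a b r g 0"
  shows "\<bar>t\<bar> \<le> max 1 (2 * 2 powr r * abs_moment a b r g 0 / (b - a))"
proof (rule ccontr)
  assume "\<not> ?thesis"
  then have t: "1 < \<bar>t\<bar>" and "2 * 2 powr r * abs_moment a b r g 0 / (b - a) < \<bar>t\<bar>"
    by auto
  then have big: "2 * 2 powr r * abs_moment a b r g 0 < \<bar>t\<bar> * (b - a)"
    using \<open>a < b\<close> by (simp add: pos_divide_less_eq)
  have "\<bar>t\<bar> powr 1 \<le> \<bar>t\<bar> powr r" using t assms by (intro powr_mono) auto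
  then have "(b - a) * \<bar>t\<bar> \<le> (\<integral>x. \<bar>t\<bar> powr r \<partial>lebesgue_on {a..b})"
    using assms t by (simp add: measure_restrict_space)
  also have "\<dots> \<le> (\<integral>x. 2 powr r * (\<bar>g x - t\<bar> powr r + \<bar>g x - 0\<bar> powr r) \<partial>lebesgue_on {a..b})"
    using abs_diff_powr_le[of r "g x" "g x - t" for x] assms
      integrable_abs_diff_powr[OF g, of r t] integrable_abs_diff_powr[OF g, of r 0]
    by (intro integral_mono) (auto simp: add.commute)
  also have "\<dots> = 2 powr r * (abs_moment a b r g t + abs_moment a b r g 0)"
    unfolding abs_moment_def using assms
      integrable_abs_diff_powr[OF g, of r t] integrable_abs_diff_powr[OF g, of r 0]
    by simp
  also have "\<dots> \<le> 2 * 2 powr r * abs_moment a b r g 0" using le by simp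
  finally show False using big by (simp add: mult.commute)
qed

lemma abs_moment_has_min:
  assumes g: "in_Lr a b r g" and "1 \<le> r" "a < b"
  shows "\<exists>t. \<forall>u. abs_moment a b r g t \<le> abs_moment a b r g u"
proof -
  define R where "R = max 1 (2 * 2 powr r * abs_moment a b r g 0 / (b - a))"
  have "continuous_on {-R..R} (abs_moment a b r g)"
  proof (rule continuous_on_sequentiallyI)
    fix u :: "nat \<Rightarrow> real" and t assume "u \<longlonglongrightarrow> t"
    then show "(\<lambda>n. abs_moment a b r g (u n)) \<longlonglongrightarrow> abs_moment a b r g t"
      using abs_moment_tendsto[OF g, of "\<lambda>_. r" r u t] assms by simp
  qed
  moreover have zero: "0 \<in> {-R..R}" by (simp add: R_def)
  ultimately obtain t where t: "t \<in> {-R..R}" "\<And>u. u \<in> {-R..R} \<Longrightarrow> abs_moment a b r g t \<le> abs_moment a b r g u"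
    using continuous_attains_inf[OF compact_Icc] by blast
  have "abs_moment a b r g t \<le> abs_moment a b r g u" for u
  proof (cases "abs_moment a b r g u \<le> abs_moment a b r g 0")
    case True
    then have "\<bar>u\<bar> \<le> R" using abs_le_if_abs_moment_le_zero[OF g] assms by (simp add: R_def)
    then have "u \<in> {-R..R}" by (simp add: abs_le_iff)
    then show ?thesis using t by blast
  next
    case False
    then show ?thesis using t(2)[OF zero] by linarith
  qed
  then show ?thesis by blast
qed

lemma abs_moment_min_unique:
  assumes g: "in_Lr a b r g" and r: "1 < r" and "a < b"
    and t1: "\<And>u. abs_moment a b r g t1 \<le> abs_moment a b r g u"
    and t2: "\<And>u. abs_moment a b r g t2 \<le> abs_moment a b r g u"
  shows "t1 = t2"
proof (rule ccontr)
  assume "t1 \<noteq> t2"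
  define m where "m = (t1 + t2) / 2"
  have int: "integrable (lebesgue_on {a..b}) (\<lambda>x. \<bar>g x - t\<bar> powr r)" for t
    using integrable_abs_diff_powr[OF g] r by simp
  have "abs_moment a b r g m
          < (\<integral>x. (\<bar>g x - t1\<bar> powr r + \<bar>g x - t2\<bar> powr r) / 2 \<partial>lebesgue_on {a..b})"
    unfolding abs_moment_def
  proof (rule finite_measure.integral_less_AE_space[OF finite_measure_lebesgue_on])
    show "emeasure (lebesgue_on {a..b}) (space (lebesgue_on {a..b})) \<noteq> 0"
      using \<open>a < b\<close> by (simp add: emeasure_restrict_space)
    show "AE x in lebesgue_on {a..b}. \<bar>g x - m\<bar> powr r < (\<bar>g x - t1\<bar> powr r + \<bar>g x - t2\<bar> powr r) / 2"
    proof (rule AE_I2)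
      fix x
      have eq: "g x - m = (g x - t1 + (g x - t2)) / 2" by (simp add: m_def field_simps)
      have "g x - t1 \<noteq> g x - t2" using \<open>t1 \<noteq> t2\<close> by simp
      from abs_powr_midpoint_less[OF this r]
      show "\<bar>g x - m\<bar> powr r < (\<bar>g x - t1\<bar> powr r + \<bar>g x - t2\<bar> powr r) / 2"
        unfolding eq .
    qed
  qed (use int in auto)
  also have "\<dots> = (abs_moment a b r g t1 + abs_moment a b r g t2) / 2"
    unfolding abs_moment_def using int by simp
  finally show False using t1[of m] t2[of m] by simp
qed

lemma
  assumes g: "in_Lr a b r g" and "1 < r" "a < b"
  shows abs_moment_tau_le: "abs_moment a b r g (tau a b r g) \<le> abs_moment a b r g u"
    and eq_tau_if_minimizer: "(\<And>u. abs_moment a b r g t \<le> abs_moment a b r g u) \<Longrightarrow> t = tau a b r g"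
proof -
  have "0 < 1 / r" using \<open>1 < r\<close> by simp
  then have "x powr (1 / r) \<le> y powr (1 / r) \<longleftrightarrow> x \<le> y" if "0 \<le> x" "0 \<le> y" for x y
    using that by (meson not_le powr_less_mono2 powr_mono2 less_imp_le)
  then have tau_eq: "tau a b r g = (THE t. \<forall>u. abs_moment a b r g t \<le> abs_moment a b r g u)"
    unfolding tau_def Lr_norm_lebesgue_on abs_moment_def[symmetric] by (simp add: abs_moment_nonneg)
  obtain t0 where t0: "\<And>u. abs_moment a b r g t0 \<le> abs_moment a b r g u"
    using abs_moment_has_min[OF g] assms by auto
  have ex1: "\<exists>!t. \<forall>u. abs_moment a b r g t \<le> abs_moment a b r g u"
    using t0 abs_moment_min_unique[OF g \<open>1 < r\<close> \<open>a < b\<close>] by blast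
  show "abs_moment a b r g (tau a b r g) \<le> abs_moment a b r g u"
    unfolding tau_eq using theI'[OF ex1] by blast
  show "(\<And>u. abs_moment a b r g t \<le> abs_moment a b r g u) \<Longrightarrow> t = tau a b r g"
    unfolding tau_eq using the1_equality[OF ex1] by auto
qed

lemma abs_tau_le:
  assumes g: "in_Lr a b r0 g" and r: "1 < r" "r \<le> r0" and "a < b"
    and I: "(\<integral>x. \<bar>g x\<bar> powr r0 \<partial>lebesgue_on {a..b}) \<le> I"
  shows "\<bar>tau a b r g\<bar> \<le> max 1 (2 * 2 powr r0 * (b - a + 2 powr r0 * I) / (b - a))"
proof -
  have gr: "in_Lr a b r g" using in_Lr_mono[OF _ _ g] r by simp
  have "abs_moment a b r g 0 \<le> b - a + 2 powr r0 * (\<integral>x. \<bar>g x\<bar> powr r0 \<partial>lebesgue_on {a..b})"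
    using abs_moment_le[OF g, of r 0 0] r \<open>a < b\<close> by simp
  also have "\<dots> \<le> b - a + 2 powr r0 * I" using I by simp
  finally have "abs_moment a b r g 0 \<le> b - a + 2 powr r0 * I" .
  moreover have "2 powr r \<le> 2 powr r0" using r by (intro powr_mono) auto
  ultimately have "2 * 2 powr r * abs_moment a b r g 0 / (b - a) \<le> 2 * 2 powr r0 * (b - a + 2 powr r0 * I) / (b - a)"
    using \<open>a < b\<close> abs_moment_nonneg by (intro divide_right_mono mult_left_mono mult_mono) auto
  moreover have "\<bar>tau a b r g\<bar> \<le> max 1 (2 * 2 powr r * abs_moment a b r g 0 / (b - a))"
    using abs_le_if_abs_moment_le_zero[OF gr] abs_moment_tau_le[OF gr] r \<open>a < b\<close> by simp
  ultimately show ?thesis by linarith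
qed

subsection \<open>Uniform convergence of the moments\<close>

lemma abs_moment_le_perturb:
  assumes g: "in_Lr a b r0 g" and h: "in_Lr a b r0 h"
    and "0 < d" "0 < e" "e \<le> 1" "0 \<le> s" "s \<le> r" "r \<le> r0" "a \<le> b"
  shows "abs_moment a b r h t \<le> (1 + d) powr r0 * abs_moment a b r g t + (1 + 1 / d) powr r0 *
           ((b - a) * e powr s + e powr (s - r0) * (\<integral>x. \<bar>h x - g x\<bar> powr r0 \<partial>lebesgue_on {a..b}))"
proof -
  have hg: "integrable (lebesgue_on {a..b}) (\<lambda>x. \<bar>h x - g x\<bar> powr r0)"
    using in_Lr_diff[OF _ h g] assms by (simp add: in_Lr_iff)
  have "abs_moment a b r h t \<le> (\<integral>x. (1 + d) powr r0 * \<bar>g x - t\<bar> powr r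
          + (1 + 1 / d) powr r0 * (e powr s + e powr (s - r0) * \<bar>h x - g x\<bar> powr r0) \<partial>lebesgue_on {a..b})"
    unfolding abs_moment_def using assms hg
    by (intro integral_mono integrable_abs_diff_powr[OF h] abs_diff_powr_le_perturb
        Bochner_Integration.integrable_add Bochner_Integration.integrable_mult_right
        integrable_abs_diff_powr[OF g])
      auto
  also have "\<dots> = (1 + d) powr r0 * abs_moment a b r g t + (1 + 1 / d) powr r0 *
           ((b - a) * e powr s + e powr (s - r0) * (\<integral>x. \<bar>h x - g x\<bar> powr r0 \<partial>lebesgue_on {a..b}))"
    unfolding abs_moment_def using integrable_abs_diff_powr[OF g] hg assms
    by (simp add: measure_restrict_space algebra_simps)
  finally show ?thesis .
qed

lemma abs_moment_dist_le:
  assumes g: "in_Lr a b r0 g" and h: "in_Lr a b r0 h"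
    and Ig: "(\<integral>x. \<bar>g x\<bar> powr r0 \<partial>lebesgue_on {a..b}) \<le> I"
    and Ih: "(\<integral>x. \<bar>h x\<bar> powr r0 \<partial>lebesgue_on {a..b}) \<le> I"
    and "0 < d" "0 < e" "e \<le> 1" "0 \<le> s" "s \<le> r" "r \<le> r0" "a \<le> b" "\<bar>t\<bar> \<le> T"
  shows "\<bar>abs_moment a b r h t - abs_moment a b r g t\<bar>
           \<le> ((1 + d) powr r0 - 1) * ((b - a) * (1 + 2 powr r0 * T powr r0) + 2 powr r0 * I)
             + (1 + 1 / d) powr r0 * ((b - a) * e powr s
                 + e powr (s - r0) * (\<integral>x. \<bar>h x - g x\<bar> powr r0 \<partial>lebesgue_on {a..b}))"
    (is "_ \<le> (?A - 1) * ?B + ?E")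
proof -
  have "1 \<le> ?A" using assms by (intro ge_one_powr_ge_zero) auto
  have slack: "(?A - 1) * abs_moment a b r k t \<le> (?A - 1) * ?B"
    if "in_Lr a b r0 k" "(\<integral>x. \<bar>k x\<bar> powr r0 \<partial>lebesgue_on {a..b}) \<le> I" for k
  proof (rule mult_left_mono)
    show "abs_moment a b r k t \<le> ?B"
      using abs_moment_le[OF that(1), of r t T] mult_left_mono[OF that(2) powr_ge_zero, of 2 r0] assms
      by linarith
  qed (use \<open>1 \<le> ?A\<close> in simp)
  have "(\<integral>x. \<bar>g x - h x\<bar> powr r0 \<partial>lebesgue_on {a..b}) = (\<integral>x. \<bar>h x - g x\<bar> powr r0 \<partial>lebesgue_on {a..b})"
    by (simp add: abs_minus_commute)
  then have "abs_moment a b r g t \<le> ?A * abs_moment a b r h t + ?E"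
    using abs_moment_le_perturb[OF h g] assms by simp
  moreover have "abs_moment a b r h t \<le> ?A * abs_moment a b r g t + ?E"
    using abs_moment_le_perturb[OF g h] assms by simp
  ultimately show ?thesis
    unfolding abs_le_iff using slack[OF g Ig] slack[OF h Ih]
      left_diff_distrib[of ?A 1 "abs_moment a b r g t"] left_diff_distrib[of ?A 1 "abs_moment a b r h t"]
    by simp
qed

lemma eventually_at_right_powr_sub_one_less:
  fixes c p \<epsilon> :: real
  assumes "0 < \<epsilon>"
  shows "\<forall>\<^sub>F d in at_right 0. 0 < d \<and> ((1 + d) powr p - 1) * c < \<epsilon>"
proof -
  have "((\<lambda>d. ((1 + d) powr p - 1) * c) \<longlongrightarrow> ((1 + 0) powr p - 1) * c) (at_right 0)"
    by (intro tendsto_intros) auto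
  then have "\<forall>\<^sub>F d in at_right 0. ((1 + d) powr p - 1) * c < \<epsilon>"
    using assms by (intro order_tendstoD(2)) auto
  with eventually_at_right_less show ?thesis by (rule eventually_conj)
qed

lemma eventually_at_right_mult_powr_less:
  fixes c s \<epsilon> :: real
  assumes "0 < \<epsilon>" "0 < s"
  shows "\<forall>\<^sub>F e in at_right 0. 0 < e \<and> e < 1 \<and> c * e powr s < \<epsilon>"
proof -
  have "\<forall>\<^sub>F e in at_right 0. 0 \<le> (e::real)"
    using eventually_at_right_less[of 0] by (rule eventually_mono) simp
  then have "((\<lambda>e. c * e powr s) \<longlongrightarrow> c * 0 powr s) (at_right 0)"
    using assms by (intro tendsto_mult tendsto_const tendsto_powr' tendsto_ident_at) auto
  then have "\<forall>\<^sub>F e in at_right 0. c * e powr s < \<epsilon>"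
    using assms by (intro order_tendstoD(2)) auto
  moreover have "\<forall>\<^sub>F e in at_right 0. e < (1::real)"
    by (rule order_tendstoD(2)[OF tendsto_ident_at]) simp
  ultimately show ?thesis using eventually_at_right_less by (intro eventually_conj) auto
qed

lemma abs_moment_uniform_limit:
  assumes g: "in_Lr a b r0 g" and G: "\<And>n. in_Lr a b r0 (G n)"
    and lim: "(\<lambda>n. \<integral>x. \<bar>G n x - g x\<bar> powr r0 \<partial>lebesgue_on {a..b}) \<longlonglongrightarrow> 0"
    and Ig: "(\<integral>x. \<bar>g x\<bar> powr r0 \<partial>lebesgue_on {a..b}) \<le> I"
    and IG: "\<And>n. (\<integral>x. \<bar>G n x\<bar> powr r0 \<partial>lebesgue_on {a..b}) \<le> I"
    and "a \<le> b" "0 < s"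
  shows "uniform_limit ({s..r0} \<times> {-T..T})
           (\<lambda>n (r, t). abs_moment a b r (G n) t) (\<lambda>(r, t). abs_moment a b r g t) sequentially"
  unfolding uniform_limit_sequentially_iff
proof (intro allI impI)
  fix \<epsilon> :: real assume "0 < \<epsilon>"
  define B where "B = (b - a) * (1 + 2 powr r0 * T powr r0) + 2 powr r0 * I"
  have "\<forall>\<^sub>F d in at_right 0. 0 < d \<and> ((1 + d) powr r0 - 1) * B < \<epsilon> / 3"
    using \<open>0 < \<epsilon>\<close> by (intro eventually_at_right_powr_sub_one_less) auto
  then obtain d where d: "0 < d" "((1 + d) powr r0 - 1) * B < \<epsilon> / 3"
    using eventually_happens'[OF trivial_limit_at_right_real] by blast
  define C where "C = (1 + 1 / d) powr r0"
  have "\<forall>\<^sub>F e in at_right 0. 0 < e \<and> e < 1 \<and> C * (b - a) * e powr s < \<epsilon> / 3"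
    using \<open>0 < \<epsilon>\<close> \<open>0 < s\<close> by (intro eventually_at_right_mult_powr_less) auto
  then obtain e where e: "0 < e" "e < 1" "C * (b - a) * e powr s < \<epsilon> / 3"
    using eventually_happens'[OF trivial_limit_at_right_real] by blast
  have "(\<lambda>n. C * (e powr (s - r0) * (\<integral>x. \<bar>G n x - g x\<bar> powr r0 \<partial>lebesgue_on {a..b}))) \<longlonglongrightarrow> 0"
    by (intro tendsto_mult_right_zero lim)
  then obtain N where N: "\<And>n. N \<le> n \<Longrightarrow>
      C * (e powr (s - r0) * (\<integral>x. \<bar>G n x - g x\<bar> powr r0 \<partial>lebesgue_on {a..b})) < \<epsilon> / 3"
    using order_tendstoD(2)[of _ 0 sequentially "\<epsilon> / 3"] \<open>0 < \<epsilon>\<close>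
    by (auto simp: eventually_sequentially)
  have "\<bar>abs_moment a b r (G n) t - abs_moment a b r g t\<bar> < \<epsilon>"
    if "N \<le> n" "r \<in> {s..r0}" "\<bar>t\<bar> \<le> T" for n r t
  proof -
    have params: "e \<le> 1" "0 \<le> s" "s \<le> r" "r \<le> r0" using e(2) \<open>0 < s\<close> that(2) by auto
    have "\<bar>abs_moment a b r (G n) t - abs_moment a b r g t\<bar>
            \<le> ((1 + d) powr r0 - 1) * B + C * ((b - a) * e powr s
               + e powr (s - r0) * (\<integral>x. \<bar>G n x - g x\<bar> powr r0 \<partial>lebesgue_on {a..b}))"
      using abs_moment_dist_le[OF g G[of n] Ig IG[of n] d(1) e(1) params \<open>a \<le> b\<close> that(3)]
      unfolding B_def C_def by simp
    then show ?thesis using d(2) e(3) N[OF that(1)] by (simp add: distrib_left mult.assoc)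
  qed
  then show "\<exists>N. \<forall>n\<ge>N. \<forall>x\<in>{s..r0} \<times> {-T..T}.
      dist ((\<lambda>(r, t). abs_moment a b r (G n) t) x) ((\<lambda>(r, t). abs_moment a b r g t) x) < \<epsilon>"
    by (intro exI[of _ N]) (auto simp: dist_real_def abs_le_iff)
qed

theorem lemma4:
  fixes a b r0 :: real and f :: "real \<Rightarrow> real" and F :: "nat \<Rightarrow> real \<Rightarrow> real"
  assumes "a < b" and "r0 > 1"
    and "in_Lr a b r0 f" and "\<And>n. in_Lr a b r0 (F n)"
    and "(\<lambda>n. Lr_norm a b r0 (\<lambda>x. F n x - f x)) \<longlonglongrightarrow> 0"
  shows "\<forall>s. 1 < s \<and> s < r0 \<longrightarrow>
           uniform_limit {s..r0} (\<lambda>n r. tau a b r (F n)) (\<lambda>r. tau a b r f) sequentially"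
proof (intro allI impI)
  fix s assume s: "1 < s \<and> s < r0"
  have lim: "(\<lambda>n. \<integral>x. \<bar>F n x - f x\<bar> powr r0 \<partial>lebesgue_on {a..b}) \<longlonglongrightarrow> 0"
    using integral_abs_powr_tendsto_zero[OF assms(5)] assms(2) by simp
  obtain I where If: "(\<integral>x. \<bar>f x\<bar> powr r0 \<partial>lebesgue_on {a..b}) \<le> I"
    and IF: "\<And>n. (\<integral>x. \<bar>F n x\<bar> powr r0 \<partial>lebesgue_on {a..b}) \<le> I"
    using integral_abs_powr_bounded[OF _ assms(3,4) lim] assms(2) by auto
  define T where "T = max 1 (2 * 2 powr r0 * (b - a + 2 powr r0 * I) / (b - a))"
  have Lr: "in_Lr a b r g" if "in_Lr a b r0 g" "r \<in> {s..r0}" for r g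
    using in_Lr_mono[OF _ _ that(1)] that(2) s by auto
  show "uniform_limit {s..r0} (\<lambda>n r. tau a b r (F n)) (\<lambda>r. tau a b r f) sequentially"
  proof (rule uniform_limit_argmin[OF compact_Icc compact_Icc])
    show "uniform_limit ({s..r0} \<times> {-T..T})
        (\<lambda>n (r, t). abs_moment a b r (F n) t) (\<lambda>(r, t). abs_moment a b r f t) sequentially"
      using assms s by (intro abs_moment_uniform_limit[OF assms(3,4) lim If IF]) auto
    show "continuous_on ({s..r0} \<times> {-T..T}) (\<lambda>(r, t). abs_moment a b r f t)"
      using s by (intro continuous_on_subset[OF abs_moment_continuous_on[OF assms(3)]]) auto
    show "tau a b r (F n) \<in> {-T..T}" "tau a b r f \<in> {-T..T}" if "r \<in> {s..r0}" for n r
    proof -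
      have "\<bar>tau a b r (F n)\<bar> \<le> T" "\<bar>tau a b r f\<bar> \<le> T"
        using abs_tau_le[OF assms(4) _ _ assms(1) IF] abs_tau_le[OF assms(3) _ _ assms(1) If] that s
        unfolding T_def by auto
      then show "tau a b r (F n) \<in> {-T..T}" "tau a b r f \<in> {-T..T}" by (auto simp: abs_le_iff)
    qed
    show "abs_moment a b r (F n) (tau a b r (F n)) \<le> abs_moment a b r (F n) u"
      "abs_moment a b r f (tau a b r f) \<le> abs_moment a b r f u" if "r \<in> {s..r0}" for n r u
      using abs_moment_tau_le[OF Lr[OF assms(4) that]] abs_moment_tau_le[OF Lr[OF assms(3) that]]
        that s assms(1) by auto
    show "t = tau a b r f" if "r \<in> {s..r0}" "\<And>u. abs_moment a b r f t \<le> abs_moment a b r f u" for r t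
      using eq_tau_if_minimizer[OF Lr[OF assms(3) that(1)]] that s assms(1) by auto
  qed
qed

end
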